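(* Let $\mu\in GF(q)\setminus\{0\}$ with $b:=\mu^2\neq1$, and let $(s,c)$ be either $\left(\frac{1+\mu}2,\left(\frac{1-\mu}2\right)^2\right)$ or $\left(\frac{1-\mu}2,\left(\frac{1+\mu}2\right)^2\right)$. Suppose that for some $P,Q\in\mathcal B_1$ with $P\neq Q$ the circles $\mathcal B^1_{(sP,c)}$ and $\mathcal B^1_{(sQ,c)}$ are tangential. Let $k$ be the multiplicative order of $Q\bar P$ in $GF(q^2)^\times$. Then $3\le k\le q+1$, and for every $R\in\mathcal B_1$ the circles $$\mathcal B^1_{(sR,c)},\ \mathcal B^1_{(sR(Q\bar P),c)},\ \mathcal B^1_{(sR(Q\bar P)^2,c)},\ \dots,\ \mathcal B^1_{(sR(Q\bar P)^{k-1},c)}$$ form a Steiner chain of length $k$ for $\mathcal B_1$ and $\mathcal B_b$. In particular, a Steiner chain of the same length $k$ can be constructed starting with any circle of $\{\mathcal B^1_{(sR,c)}:R\in\mathcal B_1\}$.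
   Context: Let $p$ be an odd prime, $m\ge1$, and $q=p^m$. $GF(q^2)$ denotes the quadratic extension of $GF(q)$, and for $z\in GF(q^2)$ we write $\bar z:=z^{q}$. The Miquelian Möbius plane $\mathbb M(q)$ has point set $GF(q^2)\cup\{\infty\}$; its circles of the first type are $\mathcal B^1_{(s,c)}=\{z\in GF(q^2):(z-s)(\bar z-\bar s)=c\}$ for $s\in GF(q^2)$, $c\in GF(q)\setminus\{0\}$ (circles of the second type are $\{z:\bar s z+s\bar z=c\}\cup\{\infty\}$ for $s\neq0$, $c\in GF(q)$). Two circles are called tangential if they have exactly one point in common. For $a\in GF(q)\setminus\{0\}$ put $\mathcal B_a:=\mathcal B^1_{(0,a)}$, and let $\tau(1,b)$ be the set of circles tangential to both $\mathcal B_1$ and $\mathcal B_b$. A Steiner chain of length $k\ge3$ for $\mathcal B_1$ and $\mathcal B_b$ is a sequence of $k$ pairwise distinct circles $T_1,\dots,T_k\in\tau(1,b)$ such that $T_i$ and $T_{i+1}$ are tangential for $i=1,\dots,k-1$ and $T_k$ and $T_1$ are tangential. *)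

theory Defs
  imports "HOL-Computational_Algebra.Primes"
begin

text \<open>The field GF(q^2) is modelled as a finite field type 'a with CARD('a) = q^2.
  GF(q) is its unique subfield of order q, i.e. the fixed points of z \<mapsto> z^q.
  Points of the Moebius plane are 'a option, with None playing the role of \<infinity>.\<close>

definition cnj :: "nat \<Rightarrow> 'a::field \<Rightarrow> 'a" where
  "cnj q z = z ^ q"

definition subfield :: "nat \<Rightarrow> 'a::field set" where
  "subfield q = {z. z ^ q = z}"

definition circle1 :: "nat \<Rightarrow> 'a::field \<Rightarrow> 'a \<Rightarrow> 'a option set" where
  "circle1 q s c = {Some z | z. (z - s) * (cnj q z - cnj q s) = c}"

definition circle2 :: "nat \<Rightarrow> 'a::field \<Rightarrow> 'a \<Rightarrow> 'a option set" where
  "circle2 q s c = {Some z | z. cnj q s * z + s * cnj q z = c} \<union> {None}"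

definition is_circle :: "nat \<Rightarrow> 'a::field option set \<Rightarrow> bool" where
  "is_circle q C \<longleftrightarrow>
     (\<exists>s c. c \<in> subfield q \<and> c \<noteq> 0 \<and> C = circle1 q s c) \<or>
     (\<exists>s c. s \<noteq> 0 \<and> c \<in> subfield q \<and> C = circle2 q s c)"

definition tangential :: "'a option set \<Rightarrow> 'a option set \<Rightarrow> bool" where
  "tangential A B \<longleftrightarrow> card (A \<inter> B) = 1"

abbreviation Bcirc :: "nat \<Rightarrow> 'a::field \<Rightarrow> 'a option set" where
  "Bcirc q a \<equiv> circle1 q 0 a"

definition tau :: "nat \<Rightarrow> 'a::field \<Rightarrow> 'a option set set" where
  "tau q b = {T. is_circle q T \<and> tangential T (Bcirc q 1) \<and> tangential T (Bcirc q b)}"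

definition steiner_chain :: "nat \<Rightarrow> 'a::field \<Rightarrow> nat \<Rightarrow> (nat \<Rightarrow> 'a option set) \<Rightarrow> bool" where
  "steiner_chain q b k T \<longleftrightarrow> k \<ge> 3 \<and> inj_on T {0..<k} \<and> (\<forall>i<k. T i \<in> tau q b) \<and>
     (\<forall>i. i + 1 < k \<longrightarrow> tangential (T i) (T (i + 1))) \<and> tangential (T (k - 1)) (T 0)"

definition mult_ord :: "'a::field \<Rightarrow> nat" where
  "mult_ord x = (LEAST n. n > 0 \<and> x ^ n = 1)"

end

theory Submission
  imports Defs "HOL-Algebra.FiniteProduct"
begin

text \<open>
  Write \<open>z' = z\<^sup>q\<close> for the conjugate and \<open>C(a,r)\<close> for the circle of the first type with
  centre \<open>a\<close> and "squared radius" \<open>r\<close>. If \<open>u u' = 1\<close>, multiplication by \<open>u\<close> maps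
  \<open>C(a,r)\<close> onto \<open>C(u a,r)\<close> and fixes every \<open>B\<^sub>a = C(0,a)\<close>. Multiplying by \<open>R P'\<close>
  therefore turns the tangent pair \<open>C(s P,c)\<close>, \<open>C(s Q,c)\<close> into the tangent pair \<open>C(s R,c)\<close>,
  \<open>C(s R \<omega>,c)\<close> with \<open>\<omega> = Q P'\<close>. A direct computation, resting on \<open>s\<^sup>2 - c = \<plusminus>\<mu>\<close>, shows that
  \<open>C(s R,c)\<close> touches \<open>B\<^sub>1\<close> exactly at \<open>R\<close> and \<open>B\<^sub>b\<close> exactly at \<open>\<plusminus>\<mu> R\<close>. Hence all these circles
  lie in \<open>\<tau>(1,b)\<close>, and the circles \<open>C(s R \<omega>\<^sup>i,c)\<close> for \<open>i\<close> below the order of \<open>\<omega>\<close> are pairwise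
  distinct (their points of contact with \<open>B\<^sub>1\<close> differ) and close up into a chain.
  Finally \<open>\<omega>\<^sup>q\<^sup>+\<^sup>1 = \<omega> \<omega>' = 1\<close>, \<open>\<omega> \<noteq> 1\<close> as \<open>P \<noteq> Q\<close>, and \<open>\<omega> \<noteq> -1\<close> because \<open>C(a,c)\<close> and
  \<open>C(-a,c)\<close> are swapped by \<open>z \<mapsto> -z\<close>, so their common points come in pairs.
\<close>

section \<open>Finite fields\<close>

definition units_group :: "'a::field monoid" where
  "units_group = \<lparr>carrier = UNIV - {0}, mult = (*), one = 1\<rparr>"

lemma carrier_units_group [simp]: "carrier units_group = UNIV - {0}"
  and one_units_group [simp]: "\<one>\<^bsub>units_group\<^esub> = 1"
  by (simp_all add: units_group_def)

lemma units_group_pow [simp]: "x [^]\<^bsub>units_group\<^esub> (n::nat) = (x::'a::field) ^ n"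
  by (induction n) (simp_all add: nat_pow_def units_group_def)

lemma comm_group_units_group: "comm_group (units_group :: 'a::field monoid)"
proof (rule comm_groupI)
  fix x :: 'a
  assume "x \<in> carrier units_group"
  then show "\<exists>y\<in>carrier units_group. y \<otimes>\<^bsub>units_group\<^esub> x = \<one>\<^bsub>units_group\<^esub>"
    by (intro bexI[of _ "inverse x"]) (auto simp: units_group_def)
qed (auto simp: units_group_def mult_ac)

lemma power_card_UNIV_eq_self:
  fixes x :: "'a::{field,finite}"
  shows "x ^ card (UNIV :: 'a set) = x"
proof (cases "x = 0")
  case False
  have "x ^ (card (UNIV :: 'a set) - 1) = 1"
    using comm_group.power_order_eq_one[OF comm_group_units_group, of x] False
    by (simp add: card_Diff_singleton)
  moreover have "x ^ card (UNIV :: 'a set) = x * x ^ (card (UNIV :: 'a set) - 1)"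
    using finite_UNIV_card_ge_0[where ?'a = 'a] by (simp flip: power_Suc)
  ultimately show ?thesis
    by simp
qed (use finite_UNIV_card_ge_0[where ?'a = 'a] in auto)

lemma of_nat_card_UNIV_eq_0: "of_nat (card (UNIV :: 'a::{field,finite} set)) = (0::'a)"
proof -
  have "(\<Sum>y\<in>UNIV. y + 1) = (\<Sum>y\<in>(UNIV::'a set). y)"
    by (rule sum.reindex_bij_witness[of _ "\<lambda>y. y - 1" "\<lambda>y. y + 1"]) auto
  then show ?thesis
    by (simp add: sum.distrib)
qed

lemma CHAR_eq_prime_if_card_UNIV_eq_power:
  assumes "prime p" and "card (UNIV :: 'a::{field,finite} set) = p ^ n"
  shows "CHAR('a) = p"
proof -
  have "prime CHAR('a)"
    by (rule prime_CHAR_semidom) (simp add: finite_imp_CHAR_pos)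
  moreover have "CHAR('a) dvd p ^ n"
    unfolding assms(2)[symmetric] of_nat_eq_0_iff_char_dvd[symmetric]
    by (rule of_nat_card_UNIV_eq_0)
  ultimately have "CHAR('a) dvd p"
    by (rule prime_dvd_power)
  with \<open>prime CHAR('a)\<close> assms(1) show ?thesis
    by (rule primes_dvd_imp_eq)
qed

section \<open>Multiplicative order\<close>

lemma
  fixes x :: "'a::field"
  assumes "x ^ n = 1" and "0 < n"
  shows mult_ord_pos: "0 < mult_ord x"
    and power_mult_ord: "x ^ mult_ord x = 1"
    and mult_ord_le: "mult_ord x \<le> n"
proof -
  have "0 < mult_ord x \<and> x ^ mult_ord x = 1"
    unfolding mult_ord_def by (rule LeastI[of _ n]) (use assms in simp)
  then show "0 < mult_ord x" and "x ^ mult_ord x = 1"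
    by simp_all
  show "mult_ord x \<le> n"
    unfolding mult_ord_def by (rule Least_le) (use assms in simp)
qed

lemma inj_on_power_mult_ord:
  fixes x :: "'a::field"
  assumes "x ^ n = 1" and "0 < n"
  shows "inj_on ((^) x) {..<mult_ord x}"
proof -
  have "x \<noteq> 0"
    using assms by (cases n) auto
  have neq: "x ^ i \<noteq> x ^ j" if "i < j" and "j < mult_ord x" for i j
  proof
    assume "x ^ i = x ^ j"
    moreover have "x ^ j = x ^ i * x ^ (j - i)"
      using \<open>i < j\<close> by (simp flip: power_add)
    ultimately have "x ^ i * x ^ (j - i) = x ^ i * 1"
      by simp
    then have "x ^ (j - i) = 1"
      using \<open>x \<noteq> 0\<close> by simp
    moreover have "\<not> (0 < j - i \<and> x ^ (j - i) = 1)"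
      unfolding mult_ord_def by (rule not_less_Least) (use that in \<open>simp add: mult_ord_def\<close>)
    ultimately show False
      using \<open>i < j\<close> by simp
  qed
  show ?thesis
  proof (rule inj_onI)
    fix i j
    assume "i \<in> {..<mult_ord x}" "j \<in> {..<mult_ord x}" "x ^ i = x ^ j"
    then show "i = j"
      by (cases i j rule: linorder_cases) (auto dest: neq)
  qed
qed

lemma three_le_mult_ord:
  fixes x :: "'a::field"
  assumes "x ^ n = 1" and "0 < n" and "x \<noteq> 1" and "x \<noteq> -1"
  shows "3 \<le> mult_ord x"
proof -
  have "mult_ord x \<noteq> 1" and "mult_ord x \<noteq> 2"
    using power_mult_ord[OF assms(1,2)] assms(3,4) by (auto simp: power2_eq_1_iff)
  then show ?thesis
    using mult_ord_pos[OF assms(1,2)] by linarith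
qed

section \<open>Conjugation and circles\<close>

lemma cnj_mult: "cnj q (x * y) = cnj q x * cnj q (y::'a::field)"
  by (simp add: cnj_def power_mult_distrib)

lemma cnj_power: "cnj q (x ^ n) = cnj q (x::'a::field) ^ n"
  by (simp add: cnj_def flip: power_mult) (simp add: mult.commute)

lemma cnj_divide: "cnj q (x / y) = cnj q x / cnj q (y::'a::field)"
  by (simp add: cnj_def power_divide)

lemma cnj_1 [simp]: "cnj q (1::'a::field) = 1"
  by (simp add: cnj_def)

lemma power_Suc_eq_1_if_unimodular:
  assumes "z * cnj q z = (1::'a::field)"
  shows "z ^ (q + 1) = 1"
  using assms by (simp add: cnj_def mult.commute)

lemma unimodular_mult_power:
  assumes "a * cnj q a = (1::'a::field)" and "b * cnj q b = 1"
  shows "(a * b ^ n) * cnj q (a * b ^ n) = 1"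
proof -
  have "(a * b ^ n) * cnj q (a * b ^ n) = (a * cnj q a) * (b * cnj q b) ^ n"
    by (simp add: cnj_mult cnj_power power_mult_distrib ac_simps)
  then show ?thesis
    using assms by simp
qed

lemma Some_mem_circle1: "Some z \<in> circle1 q a r \<longleftrightarrow> (z - a) * (cnj q z - cnj q a) = r"
  by (auto simp: circle1_def)

lemma tangential_image:
  assumes "inj f"
  shows "tangential (f ` A) (f ` B) \<longleftrightarrow> tangential A B"
  using assms unfolding tangential_def by (simp flip: image_Int add: card_image inj_on_subset)

lemma inj_map_option_times:
  assumes "u \<noteq> (0::'a::field)"
  shows "inj (map_option ((*) u))"
  by (rule option.inj_map) (simp add: assms)

text \<open>The parameter \<open>\<nu>\<close> stands for \<open>\<mu>\<close> or \<open>-\<mu>\<close>: both choices of \<open>(s, c)\<close> in the theorem take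
  the form \<open>s = (1 + \<nu>)/2\<close>, \<open>c = ((1 - \<nu>)/2)\<^sup>2\<close>, and \<open>\<nu>\<^sup>2 = \<mu>\<^sup>2 = b\<close>.\<close>
locale steiner_setting =
  fixes q :: nat and \<nu> s c :: "'a::field"
  assumes cnj_add: "cnj q (x + y) = cnj q x + cnj q (y :: 'a)"
    and cnj_cnj: "cnj q (cnj q x) = (x :: 'a)"
    and two_neq_zero: "(2::'a) \<noteq> 0"
    and cnj_nu: "cnj q \<nu> = \<nu>"
    and nu_neq_zero: "\<nu> \<noteq> 0"
    and nu_square_neq_1: "\<nu> ^ 2 \<noteq> 1"
    and s_eq: "s = (1 + \<nu>) / 2"
    and c_eq: "c = ((1 - \<nu>) / 2) ^ 2"
begin

lemma cnj_0 [simp]: "cnj q 0 = (0::'a)"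
  using cnj_add[of 0 0] by (metis add.right_neutral add_left_cancel)

lemma cnj_minus: "cnj q (- x) = - cnj q (x::'a)"
  using cnj_add[of x "- x"] by (simp add: eq_neg_iff_add_eq_0 add.commute)

lemma cnj_diff: "cnj q (x - y) = cnj q x - cnj q (y::'a)"
  using cnj_add[of x "- y"] by (simp add: cnj_minus)

lemma cnj_eq_0_iff: "cnj q x = 0 \<longleftrightarrow> (x::'a) = 0"
  by (metis cnj_0 cnj_cnj)

lemma cnj_s: "cnj q s = s"
proof -
  have "cnj q 2 = (2::'a)"
    using cnj_add[of 1 1] by simp
  then show ?thesis
    by (simp add: s_eq cnj_divide cnj_add cnj_nu)
qed

lemma s_square_minus_c: "s ^ 2 - c = \<nu>"
proof -
  have "s ^ 2 - c = (1 + \<nu>) ^ 2 / 2 ^ 2 - (1 - \<nu>) ^ 2 / 2 ^ 2"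
    unfolding s_eq c_eq power_divide ..
  also have "\<dots> = ((1 + \<nu>) ^ 2 - (1 - \<nu>) ^ 2) / 2 ^ 2"
    by (rule diff_divide_distrib[symmetric])
  also have "(1 + \<nu>) ^ 2 - (1 - \<nu>) ^ 2 = 2 ^ 2 * \<nu>"
    by (simp add: power2_eq_square algebra_simps)
  also have "2 ^ 2 * \<nu> / 2 ^ 2 = \<nu>"
    by (rule nonzero_mult_div_cancel_left[OF power_not_zero[OF two_neq_zero]])
  finally show ?thesis .
qed

lemma cnj_c: "cnj q c = c"
proof -
  have "c = s ^ 2 - \<nu>"
    using s_square_minus_c by (simp add: algebra_simps)
  then show ?thesis
    by (simp add: cnj_diff cnj_power cnj_s cnj_nu)
qed

lemma s_neq_zero: "s \<noteq> 0"
  using nu_square_neq_1 two_neq_zero by (auto simp: s_eq add_eq_0_iff)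

lemma c_neq_zero: "c \<noteq> 0"
  using nu_square_neq_1 two_neq_zero by (auto simp: c_eq)

lemma Some_mem_Bcirc: "Some z \<in> Bcirc q a \<longleftrightarrow> z * cnj q z = (a::'a)"
  by (simp add: Some_mem_circle1)

lemma unimodular_mult_cnj:
  assumes "a * cnj q a = (1::'a)" and "b * cnj q b = 1"
  shows "(a * cnj q b) * cnj q (a * cnj q b) = 1"
proof -
  have "(a * cnj q b) * cnj q (a * cnj q b) = (a * cnj q a) * (b * cnj q b)"
    by (simp add: cnj_mult cnj_cnj ac_simps)
  then show ?thesis
    using assms by simp
qed

lemma circle1_mult_unimodular:
  assumes u: "u * cnj q u = (1::'a)"
  shows "circle1 q (u * a) r = map_option ((*) u) ` circle1 q a r"
proof -
  have rotate: "(u * z - u * a) * (cnj q (u * z) - cnj q (u * a)) = (z - a) * (cnj q z - cnj q a)"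
    for z
  proof -
    have "(u * z - u * a) * (cnj q (u * z) - cnj q (u * a))
        = (u * cnj q u) * ((z - a) * (cnj q z - cnj q a))"
      by (simp add: cnj_mult algebra_simps)
    then show ?thesis
      using u by simp
  qed
  have image_eq: "(*) u ` {z. (z - a) * (cnj q z - cnj q a) = r}
      = {w. (w - u * a) * (cnj q w - cnj q (u * a)) = r}"
  proof (intro equalityI subsetI)
    fix w
    assume "w \<in> {w. (w - u * a) * (cnj q w - cnj q (u * a)) = r}"
    moreover have "w = u * (cnj q u * w)"
      using u by (simp flip: mult.assoc)
    ultimately show "w \<in> (*) u ` {z. (z - a) * (cnj q z - cnj q a) = r}"
      by (metis (mono_tags, lifting) image_eqI mem_Collect_eq rotate)
  qed (auto simp: rotate)
  then show ?thesis
    by (simp add: circle1_def setcompr_eq_image image_image flip: image_eq)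
qed

lemma tangential_circle1_mult_unimodular:
  assumes u: "u * cnj q u = (1::'a)"
  shows "tangential (circle1 q (u * a) r) (circle1 q (u * b) r)
    \<longleftrightarrow> tangential (circle1 q a r) (circle1 q b r)"
proof -
  have "inj (map_option ((*) u))"
    using u by (intro inj_map_option_times) auto
  then show ?thesis
    by (simp add: circle1_mult_unimodular[OF u] tangential_image)
qed

text \<open>Negation swaps the two circles, so their intersection is symmetric; a single common point
  would have to be \<open>0\<close>, which lies on \<open>C(a,r)\<close> only if \<open>a a' = r\<close>.\<close>
lemma not_tangential_circle1_uminus:
  assumes "a * cnj q a \<noteq> (r::'a)"
  shows "\<not> tangential (circle1 q a r) (circle1 q (- a) r)"
proof
  let ?neg = "map_option ((*) (-1 :: 'a))"
  let ?S = "circle1 q a r \<inter> circle1 q (- a) r"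
  have neg: "circle1 q (- x) r = ?neg ` circle1 q x r" for x
    using circle1_mult_unimodular[of "-1" x r] by (simp add: cnj_minus)
  have "inj ?neg"
    by (rule inj_map_option_times) simp
  then have "?neg ` ?S = ?neg ` circle1 q a r \<inter> ?neg ` circle1 q (- a) r"
    by (rule image_Int)
  also have "?neg ` circle1 q a r = circle1 q (- a) r"
    by (rule neg[symmetric])
  also have "?neg ` circle1 q (- a) r = circle1 q a r"
    using neg[of "- a"] by simp
  finally have "?neg ` ?S = ?S"
    by (simp only: Int_commute)
  assume "tangential (circle1 q a r) (circle1 q (- a) r)"
  then obtain x where S: "?S = {x}"
    unfolding tangential_def by (rule card_1_singletonE)
  then have "x \<in> circle1 q a r"
    by blast
  then obtain z where x: "x = Some z"
    by (cases x) (simp_all add: circle1_def)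
  have "- z = z"
    using \<open>?neg ` ?S = ?S\<close> S x by simp
  then have "z = 0"
    using two_neq_zero by (metis add_eq_0_iff mult_2 mult_eq_0_iff)
  then have "Some 0 \<in> circle1 q a r"
    using S x by blast
  then have "a * cnj q a = r"
    by (simp add: Some_mem_circle1)
  with assms show False ..
qed

text \<open>The points \<open>w = 1\<close> and \<open>w = \<nu>\<close> are the roots of \<open>w\<^sup>2 - 2 s w + \<nu>\<close>; combined with
  \<open>s\<^sup>2 - c = \<nu>\<close> this is exactly what makes \<open>w\<close> the only common point.\<close>
lemma circle1_s_Int_Bcirc:
  assumes w: "w = 1 \<or> w = \<nu>"
  shows "circle1 q s c \<inter> Bcirc q (w ^ 2) = {Some w}"
proof -
  have cnj_w: "cnj q w = w"
    using w cnj_nu by auto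
  have w_root: "w ^ 2 + \<nu> = 2 * s * w"
    using w two_neq_zero by (auto simp: s_eq field_simps power2_eq_square)
  have "y = w" if on_circle: "(y - s) * (cnj q y - s) = c" and on_B: "y * cnj q y = w ^ 2" for y
  proof -
    have "c = y * cnj q y - s * (y + cnj q y) + s ^ 2"
      using on_circle by (simp add: algebra_simps power2_eq_square)
    then have "s * (y + cnj q y) = y * cnj q y + (s ^ 2 - c)"
      by (simp add: algebra_simps)
    also have "\<dots> = s * (2 * w)"
      using on_B s_square_minus_c w_root by (simp add: ac_simps)
    finally have sum: "y + cnj q y = 2 * w"
      using s_neq_zero by simp
    have "(y - w) * cnj q (y - w) = y * cnj q y - w * (y + cnj q y) + w ^ 2"
      by (simp add: cnj_diff cnj_w algebra_simps power2_eq_square)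
    also have "\<dots> = 0"
      using on_B sum by (simp add: algebra_simps power2_eq_square)
    finally show "y = w"
      by (simp add: cnj_eq_0_iff)
  qed
  moreover have "(w - s) * (cnj q w - s) = c"
  proof -
    have "(w - s) * (cnj q w - s) = s ^ 2 - (2 * s * w - w ^ 2)"
      by (simp add: cnj_w algebra_simps power2_eq_square)
    also have "\<dots> = c"
      using w_root s_square_minus_c by (simp add: algebra_simps)
    finally show ?thesis .
  qed
  ultimately have Some_mem: "Some y \<in> circle1 q s c \<inter> Bcirc q (w ^ 2) \<longleftrightarrow> y = w" for y
    by (auto simp: Some_mem_circle1 Some_mem_Bcirc cnj_s cnj_w power2_eq_square)
  show ?thesis
  proof (rule Set.set_eqI)
    fix x
    show "x \<in> circle1 q s c \<inter> Bcirc q (w ^ 2) \<longleftrightarrow> x \<in> {Some w}"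
      using Some_mem by (cases x) (auto simp: circle1_def)
  qed
qed

lemma circle1_Int_Bcirc:
  assumes R: "R * cnj q R = 1" and w: "w = 1 \<or> w = \<nu>"
  shows "circle1 q (s * R) c \<inter> Bcirc q (w ^ 2) = {Some (w * R)}"
proof -
  let ?rot = "map_option ((*) R)"
  have "inj ?rot"
    using R by (intro inj_map_option_times) auto
  then have "?rot ` (circle1 q s c \<inter> Bcirc q (w ^ 2)) = ?rot ` circle1 q s c \<inter> ?rot ` Bcirc q (w ^ 2)"
    by (rule image_Int)
  also have "?rot ` circle1 q s c = circle1 q (s * R) c"
    using circle1_mult_unimodular[OF R, of s c] by (simp add: mult.commute)
  also have "?rot ` Bcirc q (w ^ 2) = Bcirc q (w ^ 2)"
    using circle1_mult_unimodular[OF R, of 0 "w ^ 2"] by simp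
  finally show ?thesis
    using circle1_s_Int_Bcirc[OF w] by (simp add: mult.commute)
qed

lemma circle1_Int_Bcirc_1:
  assumes "R * cnj q R = 1"
  shows "circle1 q (s * R) c \<inter> Bcirc q 1 = {Some R}"
  using circle1_Int_Bcirc[OF assms, of 1] by simp

lemma circle1_mem_tau:
  assumes "R * cnj q R = 1"
  shows "circle1 q (s * R) c \<in> tau q (\<nu> ^ 2)"
proof -
  have "c \<in> subfield q"
    using cnj_c by (simp add: subfield_def cnj_def)
  then have "is_circle q (circle1 q (s * R) c)"
    using c_neq_zero unfolding is_circle_def by blast
  moreover have "circle1 q (s * R) c \<inter> Bcirc q (\<nu> ^ 2) = {Some (\<nu> * R)}"
    using circle1_Int_Bcirc[OF assms, of \<nu>] by simp
  ultimately show ?thesis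
    using circle1_Int_Bcirc_1[OF assms] by (simp add: tau_def tangential_def)
qed

lemma steiner_chain_circle1_orbit:
  assumes R: "R * cnj q R = 1" and \<omega>: "\<omega> * cnj q \<omega> = 1" and ord: "3 \<le> mult_ord \<omega>"
    and tangent: "tangential (circle1 q s c) (circle1 q (s * \<omega>) c)"
  shows "steiner_chain q (\<nu> ^ 2) (mult_ord \<omega>) (\<lambda>i. circle1 q (s * R * \<omega> ^ i) c)"
proof -
  define k where "k = mult_ord \<omega>"
  define T where "T i = circle1 q (s * (R * \<omega> ^ i)) c" for i
  have orbit_unimodular: "(R * \<omega> ^ i) * cnj q (R * \<omega> ^ i) = 1" for i
    using R \<omega> by (rule unimodular_mult_power)
  have \<omega>_period: "\<omega> ^ (q + 1) = 1"
    using \<omega> by (rule power_Suc_eq_1_if_unimodular)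
  have step: "tangential (circle1 q (s * u) c) (circle1 q (s * (u * \<omega>)) c)"
    if "u * cnj q u = 1" for u
    using tangent tangential_circle1_mult_unimodular[OF that, of s c "s * \<omega>"]
    by (simp add: ac_simps)
  have "tangential (T i) (T (i + 1))" for i
    using step[OF orbit_unimodular[of i]] by (simp add: T_def ac_simps)
  moreover have "tangential (T (k - 1)) (T 0)"
  proof -
    have "R * \<omega> ^ (k - 1) * \<omega> = R * \<omega> ^ k"
      using ord by (simp add: k_def mult.assoc flip: power_Suc2)
    also have "\<dots> = R"
      using power_mult_ord[OF \<omega>_period] by (simp add: k_def)
    finally have closing: "R * \<omega> ^ (k - 1) * \<omega> = R" .
    have "tangential (T (k - 1)) (circle1 q (s * (R * \<omega> ^ (k - 1) * \<omega>)) c)"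
      using step[OF orbit_unimodular[of "k - 1"]] by (simp only: T_def)
    then show ?thesis
      unfolding closing by (simp add: T_def)
  qed
  moreover have "inj_on T {0..<k}"
  proof (rule inj_onI)
    fix i j
    assume "i \<in> {0..<k}" "j \<in> {0..<k}" "T i = T j"
    then have "T i \<inter> Bcirc q 1 = T j \<inter> Bcirc q 1"
      by simp
    then have "R * \<omega> ^ i = R * \<omega> ^ j"
      unfolding T_def circle1_Int_Bcirc_1[OF orbit_unimodular] by simp
    then have "\<omega> ^ i = \<omega> ^ j"
      using R by auto
    then show "i = j"
      using inj_on_power_mult_ord[OF \<omega>_period] \<open>i \<in> {0..<k}\<close> \<open>j \<in> {0..<k}\<close>
      by (auto simp: k_def inj_on_def)
  qed
  moreover have "T i \<in> tau q (\<nu> ^ 2)" for i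
    unfolding T_def using orbit_unimodular by (rule circle1_mem_tau)
  moreover have "(\<lambda>i. circle1 q (s * R * \<omega> ^ i) c) = T"
    by (rule ext) (simp add: T_def mult.assoc)
  ultimately show ?thesis
    using ord by (simp add: steiner_chain_def k_def)
qed

lemma steiner_chain_from_tangential_pair:
  assumes P: "P * cnj q P = 1" and Q: "Q * cnj q Q = 1" and "P \<noteq> Q"
    and tangent: "tangential (circle1 q (s * P) c) (circle1 q (s * Q) c)"
  shows "3 \<le> mult_ord (Q * cnj q P) \<and> mult_ord (Q * cnj q P) \<le> q + 1 \<and>
    (\<forall>R. Some R \<in> Bcirc q 1 \<longrightarrow>
       steiner_chain q (\<nu> ^ 2) (mult_ord (Q * cnj q P))
         (\<lambda>i. circle1 q (s * R * (Q * cnj q P) ^ i) c))"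
proof -
  define \<omega> where "\<omega> = Q * cnj q P"
  have \<omega>: "\<omega> * cnj q \<omega> = 1"
    unfolding \<omega>_def using Q P by (rule unimodular_mult_cnj)
  have \<omega>_period: "\<omega> ^ (q + 1) = 1"
    using \<omega> by (rule power_Suc_eq_1_if_unimodular)
  have "\<omega> * P = Q * (P * cnj q P)"
    by (simp add: \<omega>_def ac_simps)
  then have Q_eq: "Q = \<omega> * P"
    using P by simp
  have "cnj q P * cnj q (cnj q P) = 1"
    using P by (simp add: cnj_cnj mult.commute)
  from tangential_circle1_mult_unimodular[OF this] tangent
  have "tangential (circle1 q (cnj q P * (s * P)) c) (circle1 q (cnj q P * (s * Q)) c)"
    by blast
  moreover have "cnj q P * (s * P) = s * (P * cnj q P)" and "cnj q P * (s * Q) = s * \<omega>"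
    by (simp_all add: \<omega>_def ac_simps)
  ultimately have tangent_\<omega>: "tangential (circle1 q s c) (circle1 q (s * \<omega>) c)"
    using P by simp
  have "\<omega> \<noteq> 1"
    using \<open>P \<noteq> Q\<close> Q_eq by auto
  moreover have "\<omega> \<noteq> -1"
  proof
    assume "\<omega> = -1"
    moreover have "(s * P) * cnj q (s * P) = s ^ 2 * (P * cnj q P)"
      by (simp add: cnj_mult cnj_s power2_eq_square ac_simps)
    then have "(s * P) * cnj q (s * P) \<noteq> c"
      using P s_square_minus_c nu_neq_zero by auto
    ultimately show False
      using not_tangential_circle1_uminus tangent by (simp add: Q_eq)
  qed
  ultimately have "3 \<le> mult_ord \<omega>"
    using \<omega>_period by (intro three_le_mult_ord) auto
  then show ?thesis
    using mult_ord_le[OF \<omega>_period] steiner_chain_circle1_orbit[OF _ \<omega> _ tangent_\<omega>]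
    by (simp add: \<omega>_def Some_mem_Bcirc)
qed

end

lemma steiner_setting_GF:
  fixes \<nu> s c :: "'a::{field,finite}"
  assumes p: "prime p" "odd p" and q: "q = p ^ m" and card: "card (UNIV :: 'a set) = q ^ 2"
    and "\<nu> \<in> subfield q" and "\<nu> \<noteq> 0" and "\<nu> ^ 2 \<noteq> 1"
    and "s = (1 + \<nu>) / 2" and "c = ((1 - \<nu>) / 2) ^ 2"
  shows "steiner_setting q \<nu> s c"
proof
  have CHAR: "CHAR('a) = p"
    using card q by (intro CHAR_eq_prime_if_card_UNIV_eq_power[OF p(1), where n = "m * 2"])
      (simp add: power_mult)
  show "cnj q (x + y) = cnj q x + cnj q y" for x y :: 'a
    unfolding cnj_def using p q CHAR by (intro freshmans_dream'[where n = m]) simp_all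
  show "cnj q (cnj q x) = x" for x :: 'a
    using power_card_UNIV_eq_self[of x] card by (simp add: cnj_def power2_eq_square power_mult)
  show "(2::'a) \<noteq> 0"
  proof
    assume "(2::'a) = 0"
    then have "p dvd 2"
      using CHAR of_nat_eq_0_iff_char_dvd[of 2, where 'a='a] by simp
    then have "p = 2"
      by (rule primes_dvd_imp_eq[OF p(1) two_is_prime_nat])
    with p(2) show False
      by simp
  qed
qed (use assms in \<open>simp_all add: subfield_def cnj_def\<close>)

theorem mainTheorem8:
  fixes p m q :: nat and \<mu> s c P Q :: "'a::{field,finite}"
  assumes "prime p" and "odd p" and "m \<ge> 1" and "q = p ^ m"
    and "card (UNIV :: 'a set) = q ^ 2"
    and "\<mu> \<in> subfield q" and "\<mu> \<noteq> 0" and "\<mu> ^ 2 \<noteq> 1"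
    and "(s, c) = ((1 + \<mu>) / 2, ((1 - \<mu>) / 2) ^ 2) \<or> (s, c) = ((1 - \<mu>) / 2, ((1 + \<mu>) / 2) ^ 2)"
    and "Some P \<in> Bcirc q 1" and "Some Q \<in> Bcirc q 1" and "P \<noteq> Q"
    and "tangential (circle1 q (s * P) c) (circle1 q (s * Q) c)"
  shows "3 \<le> mult_ord (Q * cnj q P) \<and> mult_ord (Q * cnj q P) \<le> q + 1 \<and>
    (\<forall>R. Some R \<in> Bcirc q 1 \<longrightarrow>
       steiner_chain q (\<mu> ^ 2) (mult_ord (Q * cnj q P))
         (\<lambda>i. circle1 q (s * R * (Q * cnj q P) ^ i) c))"
proof -
  obtain \<nu> where \<nu>: "\<nu> = \<mu> \<or> \<nu> = - \<mu>" and "s = (1 + \<nu>) / 2" and "c = ((1 - \<nu>) / 2) ^ 2"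
    using assms(9)
  proof (elim disjE)
    assume "(s, c) = ((1 + \<mu>) / 2, ((1 - \<mu>) / 2) ^ 2)"
    then show ?thesis
      by (intro that[of \<mu>]) auto
  next
    assume "(s, c) = ((1 - \<mu>) / 2, ((1 + \<mu>) / 2) ^ 2)"
    then show ?thesis
      by (intro that[of "- \<mu>"]) auto
  qed
  moreover have "\<nu> \<in> subfield q" and "\<nu> \<noteq> 0" and "\<nu> ^ 2 = \<mu> ^ 2"
    using \<nu> assms(2,4,6,7) by (auto simp: subfield_def)
  ultimately interpret steiner_setting q \<nu> s c
    using steiner_setting_GF[OF assms(1,2,4,5)] assms(8) by simp
  have "P * cnj q P = 1" and "Q * cnj q Q = 1"
    using assms(10,11) by (simp_all add: Some_mem_Bcirc)
  then show ?thesis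
    using steiner_chain_from_tangential_pair[OF _ _ assms(12,13)] \<open>\<nu> ^ 2 = \<mu> ^ 2\<close> by simp
qed

end
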